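(* Let $n\ge1$, $\mu\in(0,1)$ and $\eta>4\mu n^2$. Let $x_*=(1+\eta,1+\frac\eta2,\dots,1+\frac\eta n)$, $\hat f(x)=\|x-x_*\|_\infty$ and $f_\mu(x)=\min_{u\in\mathbb{R}^n}\hat f(u)+\frac1{2\mu}\|x-u\|^2$. Let $p\in\{0,\dots,n-1\}$. For any $x\in\mathbb{R}^n$ with $\max_{i=p+1,\dots,n}|x^{(i)}|\le\mu$, we have $\nabla f_\mu(x)\in E_{p+1}$ and $\|\nabla f_\mu(x)\|_\infty\le 1$.
   Context: $(e_1,\dots,e_n)$ is the canonical basis of $\mathbb{R}^n$, $E_p=\operatorname{Span}(e_1,\dots,e_p)$ for $p\ge1$ and $E_0=\{0\}$. $\|\cdot\|$ is the Euclidean norm; $x^{(i)}$ is the $i$-th coordinate. $f_\mu$ (the Moreau envelope of $\hat f$) is differentiable. *)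

theory Defs
  imports "HOL-Analysis.Analysis"
begin

text \<open>Coordinates of \<open>real ^ 'n\<close> are indexed by a finite linearly ordered type;
  the coordinate \<open>k\<close> is the \<open>idx k\<close>-th coordinate (1-based), so \<open>n = CARD('n)\<close>.\<close>

definition idx :: "'n::{finite,linorder} \<Rightarrow> nat" where
  "idx k = card {j. j \<le> k}"

definition Espan :: "nat \<Rightarrow> (real ^ 'n::{finite,linorder}) set" where
  "Espan p = {x. \<forall>k. p < idx k \<longrightarrow> x $ k = 0}"

definition xstar :: "real \<Rightarrow> real ^ 'n::{finite,linorder}" where
  "xstar \<eta> = (\<chi> k. 1 + \<eta> / real (idx k))"

definition fhat :: "real \<Rightarrow> real ^ 'n::{finite,linorder} \<Rightarrow> real" where
  "fhat \<eta> x = infnorm (x - xstar \<eta>)"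

definition fmu :: "real \<Rightarrow> real \<Rightarrow> real ^ 'n::{finite,linorder} \<Rightarrow> real" where
  "fmu \<eta> \<mu> x = Inf (range (\<lambda>u. fhat \<eta> u + (norm (x - u))^2 / (2 * \<mu>)))"

end

theory Submission
  imports Defs
begin

text \<open>The Moreau envelope of \<open>f\<close> is differentiable at \<open>x\<close> with gradient \<open>g\<close> as soon as \<open>g\<close>
  is a subgradient of \<open>f\<close> at \<open>x - \<mu> g\<close>: the envelope is then squeezed between the affine
  function with slope \<open>g\<close> and that function plus \<open>\<parallel>z - x\<parallel>\<^sup>2/(2\<mu>)\<close>.
  For \<open>\<hat>f\<close> such a \<open>g\<close> is the soft thresholding of \<open>y = x - x\<^sub>*\<close>, divided by \<open>\<mu>\<close>, at the level
  \<open>\<tau>\<close> that removes exactly \<open>\<mu>\<close> units of \<open>\<ell>\<^sub>1\<close> mass; it has \<open>\<ell>\<^sub>1\<close> norm 1. Under the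
  hypotheses every coordinate of \<open>y\<close> beyond the \<open>(p+1)\<close>-th is smaller in modulus than the
  \<open>(p+1)\<close>-th by at least \<open>\<mu>\<close>, because \<open>\<eta>/(p+1) - \<eta>/k \<ge> \<eta>/n\<^sup>2 > 4\<mu>\<close>, so thresholding
  sets it to zero.\<close>

definition moreau_envelope :: "('a::real_normed_vector \<Rightarrow> real) \<Rightarrow> real \<Rightarrow> 'a \<Rightarrow> real" where
  "moreau_envelope f \<mu> x = Inf (range (\<lambda>u. f u + (norm (x - u))\<^sup>2 / (2 * \<mu>)))"

lemma fmu_eq_moreau_envelope: "fmu \<eta> \<mu> = moreau_envelope (fhat \<eta>) \<mu>"
  by (simp add: fun_eq_iff fmu_def moreau_envelope_def)

lemma has_derivative_of_quadratic_remainder: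
  fixes F :: "'a::real_normed_vector \<Rightarrow> real"
  assumes "bounded_linear D"
    and remainder: "\<And>z. \<bar>F z - F x - D (z - x)\<bar> \<le> L * (norm (z - x))\<^sup>2"
  shows "(F has_derivative D) (at x)"
proof -
  have "((\<lambda>h. norm (F (x + h) - F x - D h) / norm h) \<longlongrightarrow> 0) (at 0)"
  proof (rule tendsto_sandwich[where f = "\<lambda>_. 0" and h = "\<lambda>h. L * norm h"])
    show "\<forall>\<^sub>F h in at 0. norm (F (x + h) - F x - D h) / norm h \<le> L * norm h"
    proof (rule always_eventually, rule allI)
      fix h :: 'a
      have "norm (F (x + h) - F x - D h) / norm h \<le> L * (norm h)\<^sup>2 / norm h"
        using remainder[of "x + h"] by (simp add: divide_right_mono)
      also have "\<dots> = L * norm h"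
        by (cases "h = 0") (auto simp: power2_eq_square)
      finally show "norm (F (x + h) - F x - D h) / norm h \<le> L * norm h" .
    qed
    show "((\<lambda>h. L * norm h) \<longlongrightarrow> 0) (at (0::'a))"
      by (auto intro!: tendsto_eq_intros)
  qed auto
  then show ?thesis
    using assms(1) by (simp add: has_derivative_at)
qed

lemma moreau_envelope_has_derivative:
  fixes f :: "'a::real_inner \<Rightarrow> real"
  assumes "0 < \<mu>"
    and subgradient: "\<And>u. f (x - \<mu> *\<^sub>R g) + g \<bullet> (u - (x - \<mu> *\<^sub>R g)) \<le> f u"
  shows "(moreau_envelope f \<mu> has_derivative (\<lambda>h. g \<bullet> h)) (at x)"
proof -
  define w where "w = x - \<mu> *\<^sub>R g"
  define c where "c = f w + \<mu> * (norm g)\<^sup>2 / 2"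
  define \<phi> where "\<phi> z u = f u + (norm (z - u))\<^sup>2 / (2 * \<mu>)" for z u
  have sq: "(norm (a + t *\<^sub>R g))\<^sup>2 = (norm a)\<^sup>2 + 2 * t * (g \<bullet> a) + t\<^sup>2 * (norm g)\<^sup>2" for a t
    unfolding power2_norm_eq_inner
    by (simp add: inner_add_left inner_add_right inner_commute power2_eq_square algebra_simps)
  have lower: "c + g \<bullet> (z - x) \<le> \<phi> z u" for z u
  proof -
    have "0 \<le> (norm (z - u - \<mu> *\<^sub>R g))\<^sup>2 / (2 * \<mu>)"
      using \<open>0 < \<mu>\<close> by simp
    also have "\<dots> = (norm (z - u))\<^sup>2 / (2 * \<mu>) - g \<bullet> (z - u) + \<mu> * (norm g)\<^sup>2 / 2"
      using sq[of "z - u" "- \<mu>"] \<open>0 < \<mu>\<close> by (simp add: field_simps power2_eq_square)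
    finally show ?thesis
      using subgradient[of u] unfolding \<phi>_def c_def w_def
      by (simp add: inner_diff_right power2_norm_eq_inner algebra_simps)
  qed
  have upper: "\<phi> z w = c + g \<bullet> (z - x) + (norm (z - x))\<^sup>2 / (2 * \<mu>)" for z
  proof -
    have "z - w = (z - x) + \<mu> *\<^sub>R g"
      by (simp add: w_def)
    then have "(norm (z - w))\<^sup>2 / (2 * \<mu>)
        = (norm (z - x))\<^sup>2 / (2 * \<mu>) + g \<bullet> (z - x) + \<mu> * (norm g)\<^sup>2 / 2"
      using sq[of "z - x" \<mu>] \<open>0 < \<mu>\<close> by (simp add: field_simps power2_eq_square)
    then show ?thesis
      by (simp add: \<phi>_def c_def)
  qed
  have bounds: "c + g \<bullet> (z - x) \<le> moreau_envelope f \<mu> z \<and>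
      moreau_envelope f \<mu> z \<le> c + g \<bullet> (z - x) + (norm (z - x))\<^sup>2 / (2 * \<mu>)" for z
  proof -
    have "moreau_envelope f \<mu> z = Inf (range (\<phi> z))"
      by (simp add: moreau_envelope_def \<phi>_def)
    moreover have "c + g \<bullet> (z - x) \<le> Inf (range (\<phi> z))"
      using lower by (auto intro: cINF_greatest)
    moreover have "Inf (range (\<phi> z)) \<le> \<phi> z w"
      using lower by (auto intro!: cINF_lower bdd_belowI)
    ultimately show ?thesis
      using upper by simp
  qed
  show ?thesis
  proof (rule has_derivative_of_quadratic_remainder)
    fix z
    show "\<bar>moreau_envelope f \<mu> z - moreau_envelope f \<mu> x - g \<bullet> (z - x)\<bar>
        \<le> 1 / (2 * \<mu>) * (norm (z - x))\<^sup>2"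
      using bounds[of z] bounds[of x] by (simp add: abs_le_iff)
  qed (rule bounded_linear_inner_right)
qed

lemma inner_le_infnorm:
  fixes g v :: "real ^ 'n"
  assumes "(\<Sum>i\<in>UNIV. \<bar>g $ i\<bar>) \<le> 1"
  shows "g \<bullet> v \<le> infnorm v"
proof -
  have "g \<bullet> v = (\<Sum>i\<in>UNIV. g $ i * v $ i)"
    by (simp add: inner_vec_def)
  also have "\<dots> \<le> (\<Sum>i\<in>UNIV. \<bar>g $ i\<bar> * infnorm v)"
  proof (rule sum_mono)
    fix i
    have "g $ i * v $ i \<le> \<bar>g $ i\<bar> * \<bar>v $ i\<bar>"
      by (simp add: abs_mult[symmetric])
    also have "\<dots> \<le> \<bar>g $ i\<bar> * infnorm v"
      by (simp add: component_le_infnorm_cart mult_left_mono)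
    finally show "g $ i * v $ i \<le> \<bar>g $ i\<bar> * infnorm v" .
  qed
  also have "\<dots> = (\<Sum>i\<in>UNIV. \<bar>g $ i\<bar>) * infnorm v"
    by (simp add: sum_distrib_right)
  also have "\<dots> \<le> infnorm v"
    using assms infnorm_pos_le[of v] by (simp add: mult_left_le_one_le)
  finally show ?thesis .
qed

lemma infnorm_subgradient:
  fixes g v u :: "real ^ 'n"
  assumes "(\<Sum>i\<in>UNIV. \<bar>g $ i\<bar>) \<le> 1" and "infnorm v \<le> g \<bullet> v"
  shows "infnorm v + g \<bullet> (u - v) \<le> infnorm u"
  using assms inner_le_infnorm[OF assms(1), of u] by (simp add: inner_diff_right)

lemma infnorm_le_cart: "(\<And>i. \<bar>(x::real ^ 'n) $ i\<bar> \<le> e) \<Longrightarrow> infnorm x \<le> e"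
  unfolding infnorm_cart by (rule cSup_least) auto

definition soft_threshold :: "real \<Rightarrow> real ^ 'n \<Rightarrow> real ^ 'n" where
  "soft_threshold \<tau> y = (\<chi> i. sgn (y $ i) * max (\<bar>y $ i\<bar> - \<tau>) 0)"

lemma abs_soft_threshold:
  "0 \<le> \<tau> \<Longrightarrow> \<bar>soft_threshold \<tau> y $ i\<bar> = max (\<bar>y $ i\<bar> - \<tau>) 0"
  by (cases "y $ i = 0") (auto simp: soft_threshold_def abs_mult abs_sgn_eq)

lemma infnorm_soft_threshold_le:
  fixes y :: "real ^ 'n"
  assumes "0 \<le> \<tau>" and "(\<Sum>i\<in>UNIV. max (\<bar>y $ i\<bar> - \<tau>) 0) \<le> \<mu>"
  shows "infnorm (soft_threshold \<tau> y) \<le> \<mu>"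
proof (rule infnorm_le_cart)
  fix i
  have "max (\<bar>y $ i\<bar> - \<tau>) 0 \<le> (\<Sum>i\<in>UNIV. max (\<bar>y $ i\<bar> - \<tau>) 0)"
    by (rule member_le_sum) auto
  then show "\<bar>soft_threshold \<tau> y $ i\<bar> \<le> \<mu>"
    using assms by (simp add: abs_soft_threshold)
qed

lemma soft_threshold_eq_0: "\<bar>y $ i\<bar> \<le> \<tau> \<Longrightarrow> soft_threshold \<tau> y $ i = 0"
  by (simp add: soft_threshold_def)

lemma soft_threshold_residual_component:
  assumes "0 \<le> \<tau>"
  shows "y $ i - soft_threshold \<tau> y $ i = (if \<bar>y $ i\<bar> \<le> \<tau> then y $ i else sgn (y $ i) * \<tau>)"
  using assms by (cases "y $ i > 0") (auto simp: soft_threshold_def sgn_if algebra_simps)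

lemma infnorm_soft_threshold_residual:
  "0 \<le> \<tau> \<Longrightarrow> infnorm (y - soft_threshold \<tau> y) \<le> \<tau>"
  by (rule infnorm_le_cart) (simp add: soft_threshold_residual_component abs_mult abs_sgn_eq)

lemma inner_soft_threshold_residual:
  assumes "0 \<le> \<tau>"
  shows "soft_threshold \<tau> y \<bullet> (y - soft_threshold \<tau> y) = \<tau> * (\<Sum>i\<in>UNIV. \<bar>soft_threshold \<tau> y $ i\<bar>)"
proof -
  have "soft_threshold \<tau> y $ i * (y - soft_threshold \<tau> y) $ i = \<tau> * \<bar>soft_threshold \<tau> y $ i\<bar>" for i
    using assms by (cases "y $ i > 0") (auto simp: soft_threshold_def sgn_if max_def algebra_simps)
  then show ?thesis
    by (simp add: inner_vec_def sum_distrib_left)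
qed

lemma soft_threshold_level_exists:
  fixes y :: "real ^ 'n"
  assumes "0 \<le> \<mu>" and "\<mu> \<le> (\<Sum>i\<in>UNIV. \<bar>y $ i\<bar>)"
  obtains \<tau> where "0 \<le> \<tau>" and "(\<Sum>i\<in>UNIV. max (\<bar>y $ i\<bar> - \<tau>) 0) = \<mu>"
proof -
  define S where "S = (\<Sum>i\<in>UNIV. \<bar>y $ i\<bar>)"
  define \<phi> where "\<phi> t = (\<Sum>i\<in>UNIV. max (\<bar>y $ i\<bar> - t) 0)" for t
  have "\<phi> S = 0"
    unfolding \<phi>_def S_def
    by (intro sum.neutral ballI) (simp add: member_le_sum[of _ UNIV "\<lambda>i. \<bar>y $ i\<bar>"])
  moreover have "\<phi> 0 = S"
    by (simp add: \<phi>_def S_def)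
  moreover have "isCont \<phi> t" for t
    unfolding \<phi>_def by (intro continuous_intros)
  ultimately obtain t where "0 \<le> t" "\<phi> t = \<mu>"
    using IVT2[of \<phi> S \<mu> 0] assms S_def by (auto simp: sum_nonneg)
  then show ?thesis
    using that \<phi>_def by auto
qed

lemma soft_threshold_vanishes_below_gap:
  fixes y :: "real ^ 'n"
  assumes mass: "(\<Sum>i\<in>UNIV. max (\<bar>y $ i\<bar> - \<tau>) 0) \<le> \<mu>"
    and gap: "\<bar>y $ k\<bar> + \<mu> \<le> \<bar>y $ j\<bar>"
  shows "soft_threshold \<tau> y $ k = 0"
proof (rule soft_threshold_eq_0, rule ccontr)
  assume "\<not> \<bar>y $ k\<bar> \<le> \<tau>"
  have "(\<Sum>i\<in>{j, k}. max (\<bar>y $ i\<bar> - \<tau>) 0) \<le> (\<Sum>i\<in>UNIV. max (\<bar>y $ i\<bar> - \<tau>) 0)"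
    by (rule sum_mono2) auto
  then show False
    using mass gap \<open>\<not> \<bar>y $ k\<bar> \<le> \<tau>\<close> by (cases "j = k") auto
qed

lemma moreau_envelope_infnorm_has_derivative:
  fixes x c :: "real ^ 'n"
  assumes "0 < \<mu>" "0 \<le> \<tau>" and mass: "(\<Sum>i\<in>UNIV. max (\<bar>(x - c) $ i\<bar> - \<tau>) 0) = \<mu>"
  shows "(moreau_envelope (\<lambda>u. infnorm (u - c)) \<mu>
      has_derivative (\<lambda>h. (soft_threshold \<tau> (x - c) /\<^sub>R \<mu>) \<bullet> h)) (at x)"
proof -
  define s where "s = soft_threshold \<tau> (x - c)"
  define g where "g = s /\<^sub>R \<mu>"
  have abs_g: "\<bar>g $ i\<bar> = \<bar>s $ i\<bar> / \<mu>" for i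
    using \<open>0 < \<mu>\<close> by (simp add: g_def divide_inverse_commute abs_mult)
  have l1: "(\<Sum>i\<in>UNIV. \<bar>g $ i\<bar>) = 1"
    using assms by (simp add: abs_g s_def abs_soft_threshold sum_divide_distrib[symmetric])
  have residual: "x - \<mu> *\<^sub>R g - c = (x - c) - s"
    using \<open>0 < \<mu>\<close> by (simp add: g_def)
  have "infnorm ((x - c) - s) \<le> \<tau>"
    unfolding s_def using \<open>0 \<le> \<tau>\<close> by (rule infnorm_soft_threshold_residual)
  also have "\<tau> = g \<bullet> ((x - c) - s)"
    using assms l1 inner_soft_threshold_residual[OF \<open>0 \<le> \<tau>\<close>, of "x - c"]
    by (simp add: g_def s_def sum_divide_distrib[symmetric] abs_soft_threshold)
  finally have residual_le: "infnorm ((x - c) - s) \<le> g \<bullet> ((x - c) - s)" .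
  then have "infnorm (x - \<mu> *\<^sub>R g - c) + g \<bullet> (u - (x - \<mu> *\<^sub>R g)) \<le> infnorm (u - c)" for u
  proof -
    have "u - (x - \<mu> *\<^sub>R g) = (u - c) - (x - \<mu> *\<^sub>R g - c)"
      by simp
    then show ?thesis
      using infnorm_subgradient[OF eq_refl[OF l1] residual_le, of "u - c"]
      unfolding residual by (simp add: diff_diff_eq2 add_diff_eq)
  qed
  then have "(moreau_envelope (\<lambda>u. infnorm (u - c)) \<mu> has_derivative (\<lambda>h. g \<bullet> h)) (at x)"
    by (rule moreau_envelope_has_derivative[OF \<open>0 < \<mu>\<close>])
  then show ?thesis
    by (simp only: g_def s_def)
qed

lemma idx_ge_1: "1 \<le> idx (k::'n::{finite,linorder})"
  unfolding idx_def by (subgoal_tac "k \<in> {j. j \<le> k}") (auto simp: Suc_le_eq card_gt_0_iff)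

lemma idx_le_card: "idx (k::'n::{finite,linorder}) \<le> CARD('n)"
  unfolding idx_def by (rule card_mono) auto

lemma strict_mono_idx: "strict_mono (idx :: 'n::{finite,linorder} \<Rightarrow> nat)"
proof (rule strict_monoI)
  fix k k' :: 'n
  assume "k < k'"
  then have "{j. j \<le> k} \<subset> {j. j \<le> k'}"
    by (auto dest: leD)
  then show "idx k < idx k'"
    unfolding idx_def by (simp add: psubset_card_mono)
qed

lemma range_idx: "range (idx :: 'n::{finite,linorder} \<Rightarrow> nat) = {1..CARD('n)}"
proof (rule card_subset_eq)
  show "range (idx :: 'n \<Rightarrow> nat) \<subseteq> {1..CARD('n)}"
    using idx_ge_1 idx_le_card by auto
  show "card (range (idx :: 'n \<Rightarrow> nat)) = card {1..CARD('n)}"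
    using card_image[OF strict_mono_imp_inj_on[OF strict_mono_idx]] by simp
qed simp

lemma divide_square_le_divide:
  fixes \<eta> :: real and a N :: nat
  assumes "0 \<le> \<eta>" "0 < a" "a \<le> N"
  shows "\<eta> / (real N)\<^sup>2 \<le> \<eta> / real a"
proof -
  have "real a \<le> (real N)\<^sup>2"
    using assms by (simp add: power2_eq_square) (metis of_nat_le_iff of_nat_mult le_square order_trans)
  then show ?thesis
    using assms by (simp add: divide_left_mono)
qed

lemma divide_square_le_diff_divide:
  fixes \<eta> :: real and a b N :: nat
  assumes "0 \<le> \<eta>" "0 < a" "a < b" "b \<le> N"
  shows "\<eta> / (real N)\<^sup>2 \<le> \<eta> / real a - \<eta> / real b"
proof -
  have "\<eta> / (real N)\<^sup>2 \<le> \<eta> / (real a * real b)"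
    using assms by (intro divide_left_mono) (auto simp: power2_eq_square mult_mono)
  also have "\<dots> \<le> \<eta> * (real b - real a) / (real a * real b)"
    using assms by (intro divide_right_mono) (auto simp: mult_le_cancel_left1)
  also have "\<dots> = \<eta> / real a - \<eta> / real b"
    using assms by (simp add: field_simps)
  finally show ?thesis .
qed

lemma abs_component_diff_xstar:
  fixes x :: "real ^ 'n::{finite,linorder}"
  assumes "0 \<le> \<eta>" "\<bar>x $ k\<bar> \<le> \<mu>" "\<mu> \<le> 1"
  shows "\<bar>\<bar>(x - xstar \<eta>) $ k\<bar> - (1 + \<eta> / real (idx k))\<bar> \<le> \<mu>"
proof -
  have "x $ k \<le> \<mu>" "0 \<le> \<eta> / real (idx k)"
    using assms by auto
  then have "x $ k - (1 + \<eta> / real (idx k)) \<le> 0"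
    using assms(3) by linarith
  then have "\<bar>(x - xstar \<eta>) $ k\<bar> = 1 + \<eta> / real (idx k) - x $ k"
    by (simp add: xstar_def)
  then show ?thesis
    using assms by simp
qed

lemma xstar_dominant_component:
  fixes x :: "real ^ 'n::{finite,linorder}"
  assumes "0 < \<mu>" "\<mu> < 1" "4 * \<mu> * (real CARD('n))\<^sup>2 < \<eta>" "\<bar>x $ j\<bar> \<le> \<mu>"
  shows "\<mu> \<le> \<bar>(x - xstar \<eta>) $ j\<bar>"
proof -
  have "0 \<le> \<eta>"
    using assms by (smt (verit) mult_nonneg_nonneg zero_le_power2)
  have "4 * \<mu> < \<eta> / (real CARD('n))\<^sup>2"
    using assms by (simp add: field_simps)
  also have "\<dots> \<le> \<eta> / real (idx j)"
    using \<open>0 \<le> \<eta>\<close> idx_ge_1[of j] idx_le_card[of j] by (intro divide_square_le_divide) auto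
  finally show ?thesis
    using abs_component_diff_xstar[of \<eta> x j \<mu>] \<open>0 \<le> \<eta>\<close> assms by linarith
qed

lemma xstar_component_gap:
  fixes x :: "real ^ 'n::{finite,linorder}"
  assumes "0 < \<mu>" "\<mu> < 1" "4 * \<mu> * (real CARD('n))\<^sup>2 < \<eta>"
    and "\<bar>x $ j\<bar> \<le> \<mu>" "\<bar>x $ k\<bar> \<le> \<mu>" "idx j < idx k"
  shows "\<bar>(x - xstar \<eta>) $ k\<bar> + \<mu> \<le> \<bar>(x - xstar \<eta>) $ j\<bar>"
proof -
  have "0 \<le> \<eta>"
    using assms by (smt (verit) mult_nonneg_nonneg zero_le_power2)
  have "4 * \<mu> < \<eta> / (real CARD('n))\<^sup>2"
    using assms by (simp add: field_simps)
  also have "\<dots> \<le> \<eta> / real (idx j) - \<eta> / real (idx k)"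
    using \<open>0 \<le> \<eta>\<close> assms idx_ge_1[of j] idx_le_card[of k]
    by (intro divide_square_le_diff_divide) auto
  finally show ?thesis
    using abs_component_diff_xstar[of \<eta> x j \<mu>] abs_component_diff_xstar[of \<eta> x k \<mu>]
      \<open>0 \<le> \<eta>\<close> assms by linarith
qed

theorem lemma3p5:
  fixes \<mu> \<eta> :: real and p :: nat and x :: "real ^ 'n::{finite,linorder}"
  assumes "0 < \<mu>" and "\<mu> < 1"
    and "\<eta> > 4 * \<mu> * (real CARD('n))^2"
    and "p < CARD('n)"
    and "\<forall>k::'n. p < idx k \<longrightarrow> \<bar>x $ k\<bar> \<le> \<mu>"
  shows "\<exists>g. (fmu \<eta> \<mu> has_derivative (\<lambda>h. g \<bullet> h)) (at x)
              \<and> g \<in> Espan (p + 1) \<and> infnorm g \<le> 1"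
proof -
  define y where "y = x - xstar \<eta>"
  obtain j :: 'n where j: "idx j = p + 1"
    using range_idx assms(4) by (metis Suc_eq_plus1 Suc_leI atLeastAtMost_iff le_add2 rangeE)
  have "\<bar>x $ j\<bar> \<le> \<mu>"
    using assms(5) j by simp
  with assms(1-3) have "\<mu> \<le> \<bar>y $ j\<bar>"
    unfolding y_def by (rule xstar_dominant_component)
  also have "\<dots> \<le> (\<Sum>i\<in>UNIV. \<bar>y $ i\<bar>)"
    by (rule member_le_sum) auto
  finally obtain \<tau> where "0 \<le> \<tau>" and mass: "(\<Sum>i\<in>UNIV. max (\<bar>y $ i\<bar> - \<tau>) 0) = \<mu>"
    using soft_threshold_level_exists \<open>0 < \<mu>\<close> by (metis less_imp_le)
  define g where "g = soft_threshold \<tau> y /\<^sub>R \<mu>"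
  have "(fmu \<eta> \<mu> has_derivative (\<lambda>h. g \<bullet> h)) (at x)"
    unfolding fmu_eq_moreau_envelope fhat_def[abs_def] g_def
    using moreau_envelope_infnorm_has_derivative \<open>0 < \<mu>\<close> \<open>0 \<le> \<tau>\<close> mass
    by (simp add: y_def)
  moreover have "g \<in> Espan (p + 1)"
    unfolding Espan_def
  proof (intro CollectI allI impI)
    fix k :: 'n
    assume "p + 1 < idx k"
    then have "\<bar>y $ k\<bar> + \<mu> \<le> \<bar>y $ j\<bar>"
      unfolding y_def using assms j by (intro xstar_component_gap) auto
    then show "g $ k = 0"
      using soft_threshold_vanishes_below_gap[of y \<tau> \<mu>] mass by (simp add: g_def)
  qed
  moreover have "infnorm g \<le> 1"
    using infnorm_soft_threshold_le[OF \<open>0 \<le> \<tau>\<close>, of y \<mu>] mass \<open>0 < \<mu>\<close>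
    by (simp add: g_def infnorm_mul field_simps)
  ultimately show ?thesis
    by blast
qed

end
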